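(* Let $K_\infty=s_1s_2s_3\dots$ be the fixed point beginning with $1$ of the substitution $1\mapsto10$, $0\mapsto11$, let $t_k=\sum_{i=1}^k s_i\pmod 2$ and $\tau_\infty=\sum_{k\ge1}t_k2^{-k}$. Then the digits $0$ and $1$ each occur in the sequence $t_1t_2t_3\dots$ with asymptotic frequency $1/2$, but $\tau_\infty$ is not a normal number in base $2$ (i.e. it is not true that every binary word of length $n$ occurs in $t_1t_2\dots$ with asymptotic frequency $2^{-n}$ for all $n$). *)

theory Defs
  imports Complex_Main
begin

definition subst_letter :: "nat \<Rightarrow> nat list" where
  "subst_letter a = (if a = 1 then [1, 0] else [1, 1])"

definition subst :: "nat list \<Rightarrow> nat list" where
  "subst w = concat (map subst_letter w)"

text \<open>K_infinity = s_1 s_2 s_3 ...: the fixed point starting with 1, i.e. the limit of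
  subst^n [1]; subst^k [1] has length 2^k \<ge> k, so s_k is its (k-1)-th entry (1-based indexing).\<close>
definition s_seq :: "nat \<Rightarrow> nat" where
  "s_seq k = ((subst ^^ k) [1]) ! (k - 1)"

definition t_seq :: "nat \<Rightarrow> nat" where
  "t_seq k = (\<Sum>i=1..k. s_seq i) mod 2"

definition occ_count :: "(nat \<Rightarrow> nat) \<Rightarrow> nat list \<Rightarrow> nat \<Rightarrow> nat" where
  "occ_count x w N = card {k \<in> {1..N}. \<forall>i<length w. x (k + i) = w ! i}"

definition has_freq :: "(nat \<Rightarrow> nat) \<Rightarrow> nat list \<Rightarrow> real \<Rightarrow> bool" where
  "has_freq x w c \<longleftrightarrow> (\<lambda>N. real (occ_count x w N) / real N) \<longlonglongrightarrow> c"

definition binary_normal_seq :: "(nat \<Rightarrow> nat) \<Rightarrow> bool" where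
  "binary_normal_seq x \<longleftrightarrow>
     (\<forall>n\<ge>1. \<forall>w. length w = n \<and> set w \<subseteq> {0, 1} \<longrightarrow> has_freq x w (1 / 2 ^ n))"

end

theory Submission
  imports Defs "HOL-Analysis.Elementary_Normed_Spaces"
begin

text \<open>Every image block of the substitution starts with 1, so every letter at an odd position
  of \<open>K\<^sub>\<infinity>\<close> is 1 and the parity sequence \<open>t\<close> flips between positions \<open>2m\<close> and \<open>2m + 1\<close>.
  Hence each such pair contains one 0 and one 1, which forces both letter frequencies to be 1/2;
  and any three consecutive positions contain such a pair, so the word 000 never occurs and has
  frequency 0 instead of 1/8.\<close>

lemma length_subst [simp]: "length (subst w) = 2 * length w"
  by (induction w) (simp_all add: subst_def subst_letter_def)

lemma length_subst_power: "length ((subst ^^ n) w) = 2 ^ n * length w"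
  by (induction n) simp_all

lemma nth_subst_even: "j < length w \<Longrightarrow> subst w ! (2 * j) = 1"
proof (induction w arbitrary: j)
  case Nil
  then show ?case by simp
next
  case (Cons a w)
  show ?case
  proof (cases j)
    case 0
    then show ?thesis by (simp add: subst_def subst_letter_def)
  next
    case (Suc j')
    have "subst (a # w) = subst_letter a @ subst w"
      by (simp add: subst_def)
    then have "subst (a # w) ! (2 * j) = subst w ! (2 * j')"
      using Suc by (simp add: nth_append subst_letter_def)
    then show ?thesis
      using Cons Suc by simp
  qed
qed

lemma s_seq_odd: "s_seq (Suc (2 * m)) = 1"
proof -
  have "m < 2 ^ (2 * m)"
    using less_exp[of "2 * m"] by linarith
  then have "m < length ((subst ^^ (2 * m)) [1])"
    by (simp add: length_subst_power)
  then have "subst ((subst ^^ (2 * m)) [1]) ! (2 * m) = 1"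
    by (rule nth_subst_even)
  then show ?thesis
    by (simp add: s_seq_def)
qed

lemma t_seq_le_1: "t_seq k \<le> 1"
  unfolding t_seq_def by simp

lemma t_seq_Suc: "t_seq (Suc k) = (t_seq k + s_seq (Suc k)) mod 2"
  unfolding t_seq_def by (simp add: mod_add_left_eq)

lemma t_seq_flips_at_odd: "t_seq (Suc (2 * m)) \<noteq> t_seq (2 * m)"
  using t_seq_le_1[of "2 * m"] by (simp add: t_seq_Suc s_seq_odd) presburger

lemma occ_count_Suc:
  "occ_count x w (Suc N) =
     occ_count x w N + (if \<forall>i<length w. x (Suc N + i) = w ! i then 1 else 0)"
proof -
  let ?P = "\<lambda>k. \<forall>i<length w. x (k + i) = w ! i"
  have "{k \<in> {1..Suc N}. ?P k} = {k \<in> {1..N}. ?P k} \<union> (if ?P (Suc N) then {Suc N} else {})"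
    by (auto simp: le_Suc_eq)
  then show ?thesis
    by (simp add: occ_count_def)
qed

lemma has_freq_if_bounded_deviation:
  assumes "\<And>N. \<bar>real (occ_count x w N) - c * real N\<bar> \<le> B"
  shows "has_freq x w c"
proof -
  have "(\<lambda>N. real (occ_count x w N) / real N - c) \<longlonglongrightarrow> 0"
  proof (rule Lim_null_comparison)
    show "\<forall>\<^sub>F N in sequentially. norm (real (occ_count x w N) / real N - c) \<le> B / real N"
    proof (rule eventually_sequentiallyI[of 1])
      fix N :: nat
      assume "1 \<le> N"
      then have "real (occ_count x w N) / real N - c = (real (occ_count x w N) - c * real N) / real N"
        by (simp add: field_simps)
      then show "norm (real (occ_count x w N) / real N - c) \<le> B / real N"
        using assms[of N] by (simp add: abs_divide divide_right_mono)
    qed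
    show "(\<lambda>N. B / real N) \<longlonglongrightarrow> 0"
      by (rule lim_const_over_n)
  qed
  then show ?thesis
    by (simp add: has_freq_def LIM_zero_iff)
qed

text \<open>Counting starts at position 1, which lies in no pair \<open>(2m, 2m + 1)\<close> with \<open>m \<ge> 1\<close>;
  it contributes the leftover term \<open>occ_count x [a] 1\<close>.\<close>

lemma occ_count_letter_if_flipping:
  assumes binary: "\<And>k. x k \<le> 1" and flip: "\<And>m. x (Suc (2 * m)) \<noteq> x (2 * m)"
    and "a \<le> 1"
  shows "occ_count x [a] (Suc (2 * M)) = occ_count x [a] 1 + M"
proof (induction M)
  case 0
  then show ?case by simp
next
  case (Suc M)
  have "x (Suc (Suc (2 * M))) \<noteq> x (Suc (Suc (Suc (2 * M))))"
    using flip[of "Suc M"] by simp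
  then have "(if x (Suc (Suc (2 * M))) = a then 1 else 0)
      + (if x (Suc (Suc (Suc (2 * M)))) = a then 1 else 0) = (1::nat)"
    using binary[of "Suc (Suc (2 * M))"] binary[of "Suc (Suc (Suc (2 * M)))"] \<open>a \<le> 1\<close>
    by auto
  then show ?case
    using Suc.IH by (simp add: occ_count_Suc)
qed

lemma has_freq_half_if_flipping:
  assumes binary: "\<And>k. x k \<le> 1" and flip: "\<And>m. x (Suc (2 * m)) \<noteq> x (2 * m)"
    and "a \<le> 1"
  shows "has_freq x [a] (1 / 2)"
proof (rule has_freq_if_bounded_deviation)
  fix N
  define c where "c = occ_count x [a] 1"
  have c_le: "c \<le> 1"
    using occ_count_Suc[of x "[a]" 0] by (simp add: c_def occ_count_def)
  have odd_count: "occ_count x [a] (Suc (2 * M)) = c + M" for M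
    unfolding c_def by (rule occ_count_letter_if_flipping[OF binary flip \<open>a \<le> 1\<close>])
  show "\<bar>real (occ_count x [a] N) - 1 / 2 * real N\<bar> \<le> 1"
  proof (cases "even N")
    case True
    then obtain M where N: "N = 2 * M" by blast
    have "occ_count x [a] N \<le> c + M" "c + M \<le> occ_count x [a] N + 1"
      using odd_count[of M] occ_count_Suc[of x "[a]" N] N by auto
    then show ?thesis
      using c_le N by linarith
  next
    case False
    then obtain M where N: "N = Suc (2 * M)"
      by (metis oddE Suc_eq_plus1)
    show ?thesis
      using odd_count[of M] c_le N by (simp add: abs_le_iff field_simps)
  qed
qed

lemma occ_count_triple_if_flipping:
  assumes flip: "\<And>m. x (Suc (2 * m)) \<noteq> x (2 * m)"
  shows "occ_count x [a, a, a] N = 0"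
proof -
  have "\<not> (x k = a \<and> x (Suc k) = a \<and> x (Suc (Suc k)) = a)" for k
  proof (cases "even k")
    case True
    then obtain m where "k = 2 * m" by blast
    then show ?thesis using flip[of m] by auto
  next
    case False
    then obtain m where "Suc k = 2 * m" by (metis even_Suc evenE)
    then show ?thesis using flip[of m] by auto
  qed
  then have "{k \<in> {1..N}. \<forall>i<length [a, a, a]. x (k + i) = [a, a, a] ! i} = {}"
    by (fastforce simp: less_Suc_eq numeral_3_eq_3)
  then show ?thesis
    by (simp add: occ_count_def)
qed

lemma not_binary_normal_if_word_missing:
  assumes "w \<noteq> []" and "set w \<subseteq> {0, 1}" and "\<And>N. occ_count x w N = 0"
  shows "\<not> binary_normal_seq x"
proof
  assume "binary_normal_seq x"
  then have "has_freq x w (1 / 2 ^ length w)"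
    using assms(1,2) by (simp add: binary_normal_seq_def Suc_le_eq)
  then have "(\<lambda>N. 0 :: real) \<longlonglongrightarrow> 1 / 2 ^ length w"
    by (simp add: has_freq_def assms(3))
  then show False
    using LIMSEQ_unique[OF tendsto_const] by force
qed

theorem mainTheorem10:
  shows "has_freq t_seq [0] (1/2) \<and> has_freq t_seq [1] (1/2) \<and> \<not> binary_normal_seq t_seq"
proof (intro conjI)
  show "has_freq t_seq [0] (1/2)" "has_freq t_seq [1] (1/2)"
    by (simp_all add: has_freq_half_if_flipping[OF t_seq_le_1 t_seq_flips_at_odd])
  have "occ_count t_seq [0, 0, 0] N = 0" for N
    by (rule occ_count_triple_if_flipping[OF t_seq_flips_at_odd])
  then show "\<not> binary_normal_seq t_seq"
    by (intro not_binary_normal_if_word_missing[of "[0, 0, 0]"]) simp_all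
qed

end
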